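(* Let $(X,\mu)$ be a standard probability space, let $T$ be a bounded self-adjoint operator on $L^2(X,\mu)$, let $k\in\mathbb{N}$, and let $(A_i)_{1\le i\le k}$ be a $\mu$-measurable partition of $X$. Let $(T_{ij})_{i,j=1}^k$ be the block decomposition of $T$ with respect to $L^2(X)=\bigoplus_{i=1}^k L^2(A_i)$, i.e. $T_{ij}:L^2(A_j)\to L^2(A_i)$ is the composition of $T$ restricted to $L^2(A_j)$ with the orthogonal projection onto $L^2(A_i)$. Then $$(k-1)\,m(T)+M(T)\le\sum_{i=1}^k M(T_{ii}).$$
   Context: For a bounded self-adjoint operator $S$ on a Hilbert space $H$, $M(S)=\sup_{0\ne f\in H}\langle Sf,f\rangle/\langle f,f\rangle$ and $m(S)=\inf_{0\ne f\in H}\langle Sf,f\rangle/\langle f,f\rangle$. *)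

theory Defs
  imports "HOL-Probability.Probability"
begin

definition standard_prob_space :: "'a measure \<Rightarrow> bool" where
  "standard_prob_space M \<longleftrightarrow> prob_space M \<and>
     (\<exists>(Xt :: 'a topology) N. completely_metrizable_space Xt \<and> separable_space Xt \<and>
        space N = topspace Xt \<and> sets N = sigma_sets (topspace Xt) {U. openin Xt U} \<and>
        M = completion N)"

text \<open>Elements of L^2(X,mu) (complex-valued), represented by functions.\<close>
definition L2 :: "'a measure \<Rightarrow> ('a \<Rightarrow> complex) set" where
  "L2 M = {f. f \<in> borel_measurable M \<and> integrable M (\<lambda>x. (cmod (f x))\<^sup>2)}"

definition L2_on :: "'a measure \<Rightarrow> 'a set \<Rightarrow> ('a \<Rightarrow> complex) set" where
  "L2_on M A = {f \<in> L2 M. AE x in M. x \<notin> A \<longrightarrow> f x = 0}"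

definition l2_inner :: "'a measure \<Rightarrow> ('a \<Rightarrow> complex) \<Rightarrow> ('a \<Rightarrow> complex) \<Rightarrow> complex" where
  "l2_inner M f g = integral\<^sup>L M (\<lambda>x. f x * cnj (g x))"

definition bounded_op_L2 :: "'a measure \<Rightarrow> (('a \<Rightarrow> complex) \<Rightarrow> ('a \<Rightarrow> complex)) \<Rightarrow> bool" where
  "bounded_op_L2 M T \<longleftrightarrow>
     (\<forall>f \<in> L2 M. T f \<in> L2 M) \<and>
     (\<forall>f \<in> L2 M. \<forall>g \<in> L2 M. (AE x in M. f x = g x) \<longrightarrow> (AE x in M. T f x = T g x)) \<and>
     (\<forall>f \<in> L2 M. \<forall>g \<in> L2 M. \<forall>c::complex.
        AE x in M. T (\<lambda>y. c * f y + g y) x = c * T f x + T g x) \<and>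
     (\<exists>C. \<forall>f \<in> L2 M. Re (l2_inner M (T f) (T f)) \<le> C * Re (l2_inner M f f))"

definition selfadjoint_op_L2 :: "'a measure \<Rightarrow> (('a \<Rightarrow> complex) \<Rightarrow> ('a \<Rightarrow> complex)) \<Rightarrow> bool" where
  "selfadjoint_op_L2 M T \<longleftrightarrow> bounded_op_L2 M T \<and>
     (\<forall>f \<in> L2 M. \<forall>g \<in> L2 M. l2_inner M (T f) g = l2_inner M f (T g))"

text \<open>M(S) and m(S) for an operator S on the closed subspace H of L^2(M)
  (with the L^2(M) inner product). The quotient <Sf,f>/<f,f> is real for self-adjoint S;
  we take its real part.\<close>
definition Mop :: "'a measure \<Rightarrow> ('a \<Rightarrow> complex) set \<Rightarrow> (('a \<Rightarrow> complex) \<Rightarrow> ('a \<Rightarrow> complex)) \<Rightarrow> real" where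
  "Mop M H S = Sup {Re (l2_inner M (S f) f / l2_inner M f f) | f. f \<in> H \<and> l2_inner M f f \<noteq> 0}"

definition mop :: "'a measure \<Rightarrow> ('a \<Rightarrow> complex) set \<Rightarrow> (('a \<Rightarrow> complex) \<Rightarrow> ('a \<Rightarrow> complex)) \<Rightarrow> real" where
  "mop M H S = Inf {Re (l2_inner M (S f) f / l2_inner M f f) | f. f \<in> H \<and> l2_inner M f f \<noteq> 0}"

text \<open>Block T_ij : L^2(A_j) -> L^2(A_i): T restricted to L^2(A_j), followed by the
  orthogonal projection onto L^2(A_i) (multiplication by the indicator of A_i).\<close>
definition block_op :: "'a set \<Rightarrow> (('a \<Rightarrow> complex) \<Rightarrow> ('a \<Rightarrow> complex)) \<Rightarrow> ('a \<Rightarrow> complex) \<Rightarrow> ('a \<Rightarrow> complex)" where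
  "block_op Ai T f = (\<lambda>x. indicator Ai x * T f x)"

end

theory Submission
  imports Defs
begin

text \<open>Put \<open>m = m(T)\<close>. Since \<open>T - m\<close> is positive, the form \<open>B(x,y) = Re \<langle>Tx,y\<rangle> - m Re \<langle>x,y\<rangle>\<close>
  satisfies \<open>B(x,y) \<le> (B(x,x) B(y,y))^(1/2)\<close>. Let \<open>f\<^sub>i\<close> be the restriction of \<open>f\<close> to \<open>A\<^sub>i\<close>, so that
  \<open>f = \<Sum>\<^sub>i f\<^sub>i\<close> with the \<open>f\<^sub>i\<close> mutually orthogonal, and put \<open>d\<^sub>i = M(T\<^sub>i\<^sub>i) - m\<close>; testing both
  quotients on the indicator of \<open>A\<^sub>i\<close> (which has positive measure) shows \<open>d\<^sub>i \<ge> 0\<close>.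
  Then \<open>B(f\<^sub>i,f\<^sub>i) \<le> d\<^sub>i \<parallel>f\<^sub>i\<parallel>\<^sup>2\<close>, and by the Cauchy--Schwarz inequality in \<open>\<real>\<^sup>k\<close>
  \<open>B(f,f) = \<Sum>\<^sub>i\<^sub>j B(f\<^sub>i,f\<^sub>j) \<le> (\<Sum>\<^sub>i (d\<^sub>i)^(1/2) \<parallel>f\<^sub>i\<parallel>)\<^sup>2 \<le> (\<Sum>\<^sub>i d\<^sub>i) \<parallel>f\<parallel>\<^sup>2\<close>.
  Hence \<open>\<langle>Tf,f\<rangle> \<le> (m + \<Sum>\<^sub>i d\<^sub>i) \<parallel>f\<parallel>\<^sup>2\<close>, i.e. \<open>M(T) \<le> \<Sum>\<^sub>i M(T\<^sub>i\<^sub>i) - (k - 1) m\<close>.\<close>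

lemma quadratic_nonneg_imp_le_sqrt:
  fixes a b c :: real
  assumes a: "0 \<le> a" and c: "0 \<le> c" and nonneg: "\<And>t. 0 \<le> a + 2 * t * b + t\<^sup>2 * c"
  shows "b \<le> sqrt (a * c)"
proof (cases "b \<le> 0")
  case True
  then show ?thesis
    using a c by (meson order_trans real_sqrt_ge_zero mult_nonneg_nonneg)
next
  case False
  then have b: "0 < b"
    by simp
  show ?thesis
  proof (cases "c = 0")
    case True
    have "0 \<le> a + 2 * (- (a + 1) / (2 * b)) * b"
      using nonneg[of "- (a + 1) / (2 * b)"] True by simp
    also have "\<dots> = -1"
      using b by (simp add: field_simps)
    finally show ?thesis
      by simp
  next
    case False
    then have c: "0 < c"
      using c by simp
    have "0 \<le> a + 2 * (- b / c) * b + (- b / c)\<^sup>2 * c"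
      by (rule nonneg)
    also have "\<dots> = a - b\<^sup>2 / c"
      using c by (simp add: field_simps power2_eq_square)
    finally have "b\<^sup>2 \<le> a * c"
      using c by (simp add: pos_divide_le_eq)
    then show ?thesis
      using b real_le_rsqrt by blast
  qed
qed

lemma double_sum_le_sum_mult_sum:
  fixes P d n :: "'i \<Rightarrow> real" and B :: "'i \<Rightarrow> 'i \<Rightarrow> real"
  assumes "finite I"
    and B: "\<And>i j. i \<in> I \<Longrightarrow> j \<in> I \<Longrightarrow> B i j \<le> sqrt (P i * P j)"
    and P: "\<And>i. i \<in> I \<Longrightarrow> 0 \<le> P i \<and> P i \<le> d i * n i"
    and dn: "\<And>i. i \<in> I \<Longrightarrow> 0 \<le> d i \<and> 0 \<le> n i"
  shows "(\<Sum>i\<in>I. \<Sum>j\<in>I. B i j) \<le> (\<Sum>i\<in>I. d i) * (\<Sum>i\<in>I. n i)"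
proof -
  have "(\<Sum>i\<in>I. \<Sum>j\<in>I. B i j) \<le> (\<Sum>i\<in>I. \<Sum>j\<in>I. sqrt (P i) * sqrt (P j))"
    using B by (intro sum_mono) (simp add: real_sqrt_mult)
  also have "\<dots> = (\<Sum>i\<in>I. sqrt (P i))\<^sup>2"
    by (simp add: power2_eq_square sum_product)
  also have "\<dots> \<le> (\<Sum>i\<in>I. sqrt (d i) * sqrt (n i))\<^sup>2"
    using P by (intro power_mono sum_mono sum_nonneg) (simp_all add: real_sqrt_mult[symmetric])
  also have "\<dots> \<le> (\<Sum>i\<in>I. (sqrt (d i))\<^sup>2) * (\<Sum>i\<in>I. (sqrt (n i))\<^sup>2)"
    by (rule Cauchy_Schwarz_ineq_sum)
  also have "\<dots> = (\<Sum>i\<in>I. d i) * (\<Sum>i\<in>I. n i)"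
    using dn by (simp cong: sum.cong)
  finally show ?thesis .
qed

lemma borel_measurable_cnj [measurable]:
  "g \<in> borel_measurable M \<Longrightarrow> (\<lambda>x. cnj (g x)) \<in> borel_measurable M"
  by (rule borel_measurable_continuous_on[OF linear_continuous_on[OF bounded_linear_cnj]])

lemma L2_borel_measurable [measurable_dest]: "f \<in> L2 M \<Longrightarrow> f \<in> borel_measurable M"
  by (simp add: L2_def)

lemma L2_integrable_norm_square: "f \<in> L2 M \<Longrightarrow> integrable M (\<lambda>x. (cmod (f x))\<^sup>2)"
  by (simp add: L2_def)

lemma L2_zero: "(\<lambda>x. 0) \<in> L2 M"
  by (simp add: L2_def)

lemma L2_lincomb:
  assumes f: "f \<in> L2 M" and g: "g \<in> L2 M"
  shows "(\<lambda>x. c * f x + g x) \<in> L2 M"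
proof -
  note [measurable] = L2_borel_measurable[OF f] L2_borel_measurable[OF g]
  have bound: "(cmod (c * f x + g x))\<^sup>2 \<le> 2 * (cmod c)\<^sup>2 * (cmod (f x))\<^sup>2 + 2 * (cmod (g x))\<^sup>2" for x
  proof -
    have "cmod (c * f x + g x) \<le> cmod c * cmod (f x) + cmod (g x)"
      by (metis norm_mult norm_triangle_ineq)
    then have "(cmod (c * f x + g x))\<^sup>2 \<le> (cmod c * cmod (f x) + cmod (g x))\<^sup>2"
      by (simp add: power_mono)
    also have "\<dots> \<le> 2 * (cmod c * cmod (f x))\<^sup>2 + 2 * (cmod (g x))\<^sup>2"
      unfolding power2_sum using sum_squares_bound[of "cmod c * cmod (f x)" "cmod (g x)"] by linarith
    finally show ?thesis
      by (simp add: power_mult_distrib)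
  qed
  have "integrable M (\<lambda>x. 2 * (cmod c)\<^sup>2 * (cmod (f x))\<^sup>2 + 2 * (cmod (g x))\<^sup>2)"
    using f g by (simp add: L2_integrable_norm_square)
  then have "integrable M (\<lambda>x. (cmod (c * f x + g x))\<^sup>2)"
    by (rule Bochner_Integration.integrable_bound) (use f g bound in auto)
  then show ?thesis
    by (simp add: L2_def)
qed

lemma L2_sum:
  assumes "finite I" and "\<And>i. i \<in> I \<Longrightarrow> g i \<in> L2 M"
  shows "(\<lambda>x. \<Sum>i\<in>I. g i x) \<in> L2 M"
  using assms
proof (induction I rule: finite_induct)
  case empty
  then show ?case by (simp add: L2_zero)
next
  case (insert j I)
  then show ?case
    using L2_lincomb[of "g j" M "\<lambda>x. \<Sum>i\<in>I. g i x" 1] by simp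
qed

lemma L2_integrable_mult_cnj:
  assumes f: "f \<in> L2 M" and g: "g \<in> L2 M"
  shows "integrable M (\<lambda>x. f x * cnj (g x))"
proof -
  have "norm (f x * cnj (g x)) \<le> (cmod (f x))\<^sup>2 + (cmod (g x))\<^sup>2" for x
  proof -
    have "0 \<le> cmod (f x) * cmod (g x)"
      by simp
    then show ?thesis
      unfolding norm_mult complex_mod_cnj using sum_squares_bound[of "cmod (f x)" "cmod (g x)"] by linarith
  qed
  moreover have "integrable M (\<lambda>x. (cmod (f x))\<^sup>2 + (cmod (g x))\<^sup>2)"
    using f g by (simp add: L2_integrable_norm_square)
  ultimately show ?thesis
    using f g by (auto intro: Bochner_Integration.integrable_bound)
qed

lemma l2_inner_cong_AE:
  assumes "f \<in> borel_measurable M" "f' \<in> borel_measurable M"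
    and "g \<in> borel_measurable M" "g' \<in> borel_measurable M"
    and "AE x in M. f x = f' x" "AE x in M. g x = g' x"
  shows "l2_inner M f g = l2_inner M f' g'"
  unfolding l2_inner_def
  by (rule integral_cong_AE) (use assms in \<open>auto elim: AE_mp\<close>)

lemma l2_inner_commute: "l2_inner M g f = cnj (l2_inner M f g)"
proof -
  have "(\<lambda>x. g x * cnj (f x)) = (\<lambda>x. cnj (f x * cnj (g x)))"
    by (simp add: mult.commute)
  then show ?thesis
    unfolding l2_inner_def by (simp only:) (rule Bochner_Integration.integral_cnj)
qed

lemma l2_inner_lincomb_left:
  assumes "f \<in> L2 M" "g \<in> L2 M" "h \<in> L2 M"
  shows "l2_inner M (\<lambda>x. c * f x + g x) h = c * l2_inner M f h + l2_inner M g h"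
proof -
  have "(\<lambda>x. (c * f x + g x) * cnj (h x)) = (\<lambda>x. c * (f x * cnj (h x)) + g x * cnj (h x))"
    by (simp add: algebra_simps)
  then show ?thesis
    using assms by (simp add: l2_inner_def L2_integrable_mult_cnj)
qed

lemma l2_inner_lincomb_right:
  assumes "f \<in> L2 M" "g \<in> L2 M" "h \<in> L2 M"
  shows "l2_inner M h (\<lambda>x. c * f x + g x) = cnj c * l2_inner M h f + l2_inner M h g"
  using l2_inner_lincomb_left[OF assms, of c]
  by (metis l2_inner_commute complex_cnj_add complex_cnj_cnj complex_cnj_mult)

lemma Re_l2_inner_real_lincomb:
  fixes t :: real and u v x y :: "'a \<Rightarrow> complex"
  assumes "u \<in> L2 M" "v \<in> L2 M" "x \<in> L2 M" "y \<in> L2 M"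
  shows "Re (l2_inner M (\<lambda>a. of_real t * u a + v a) (\<lambda>a. of_real t * y a + x a))
    = t\<^sup>2 * Re (l2_inner M u y) + t * (Re (l2_inner M u x) + Re (l2_inner M v y)) + Re (l2_inner M v x)"
proof -
  have "l2_inner M (\<lambda>a. of_real t * u a + v a) (\<lambda>a. of_real t * y a + x a)
    = of_real t * (of_real t * l2_inner M u y + l2_inner M u x) + (of_real t * l2_inner M v y + l2_inner M v x)"
    using assms by (simp add: l2_inner_lincomb_left l2_inner_lincomb_right L2_lincomb)
  then show ?thesis
    by (simp add: algebra_simps power2_eq_square)
qed

lemma l2_inner_sum_sum:
  assumes "finite I" "finite J"
    and "\<And>i. i \<in> I \<Longrightarrow> g i \<in> L2 M" "\<And>j. j \<in> J \<Longrightarrow> h j \<in> L2 M"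
  shows "l2_inner M (\<lambda>x. \<Sum>i\<in>I. g i x) (\<lambda>x. \<Sum>j\<in>J. h j x) = (\<Sum>i\<in>I. \<Sum>j\<in>J. l2_inner M (g i) (h j))"
proof -
  have "(\<lambda>x. (\<Sum>i\<in>I. g i x) * cnj (\<Sum>j\<in>J. h j x)) = (\<lambda>x. \<Sum>i\<in>I. \<Sum>j\<in>J. g i x * cnj (h j x))"
    by (simp add: sum_product)
  then show ?thesis
    using assms
    by (simp add: l2_inner_def Bochner_Integration.integral_sum L2_integrable_mult_cnj)
qed

lemma l2_inner_self: "l2_inner M f f = of_real (integral\<^sup>L M (\<lambda>x. (cmod (f x))\<^sup>2))"
proof -
  have "f x * cnj (f x) = of_real ((cmod (f x))\<^sup>2)" for x
    by (simp only: complex_norm_square)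
  then show ?thesis
    unfolding l2_inner_def by (simp only: integral_complex_of_real)
qed

lemma Re_l2_inner_self_nonneg: "0 \<le> Re (l2_inner M f f)"
  by (simp add: l2_inner_self)

lemma l2_inner_self_neq_0_iff: "l2_inner M f f \<noteq> 0 \<longleftrightarrow> 0 < Re (l2_inner M f f)"
  using Re_l2_inner_self_nonneg[of M f] unfolding l2_inner_self
  by (simp only: Re_complex_of_real of_real_eq_0_iff) linarith

lemma Re_divide_l2_inner_self: "Re (z / l2_inner M f f) = Re z / Re (l2_inner M f f)"
  by (simp add: l2_inner_self)

lemma l2_inner_self_eq_0_imp_AE_zero:
  assumes "f \<in> L2 M" "l2_inner M f f = 0"
  shows "AE x in M. f x = 0"
proof -
  have "AE x in M. (cmod (f x))\<^sup>2 = 0"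
    using assms integral_nonneg_eq_0_iff_AE[of M "\<lambda>x. (cmod (f x))\<^sup>2"]
    by (simp add: l2_inner_self L2_integrable_norm_square)
  then show ?thesis
    by simp
qed

lemma l2_inner_eq_0_if_self_eq_0:
  assumes "f \<in> L2 M" "g \<in> borel_measurable M" "l2_inner M f f = 0"
  shows "l2_inner M g f = 0"
proof -
  have "l2_inner M g f = l2_inner M g (\<lambda>x. 0)"
    using assms l2_inner_self_eq_0_imp_AE_zero by (intro l2_inner_cong_AE) auto
  then show ?thesis
    by (simp add: l2_inner_def)
qed

lemma bounded_op_L2_closed: "bounded_op_L2 M T \<Longrightarrow> f \<in> L2 M \<Longrightarrow> T f \<in> L2 M"
  by (simp add: bounded_op_L2_def)

lemma bounded_op_L2_cong_AE:
  "bounded_op_L2 M T \<Longrightarrow> f \<in> L2 M \<Longrightarrow> g \<in> L2 M \<Longrightarrow> AE x in M. f x = g x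
    \<Longrightarrow> AE x in M. T f x = T g x"
  by (simp add: bounded_op_L2_def)

lemma bounded_op_L2_lincomb:
  "bounded_op_L2 M T \<Longrightarrow> f \<in> L2 M \<Longrightarrow> g \<in> L2 M
    \<Longrightarrow> AE x in M. T (\<lambda>y. c * f y + g y) x = c * T f x + T g x"
  by (simp add: bounded_op_L2_def)

lemma bounded_op_L2_zero:
  assumes "bounded_op_L2 M T"
  shows "AE x in M. T (\<lambda>y. 0) x = 0"
  using bounded_op_L2_lincomb[OF assms L2_zero L2_zero, of "-1"] by simp

lemma bounded_op_L2_sum:
  assumes T: "bounded_op_L2 M T" and "finite I" and "\<And>i. i \<in> I \<Longrightarrow> g i \<in> L2 M"
  shows "AE x in M. T (\<lambda>y. \<Sum>i\<in>I. g i y) x = (\<Sum>i\<in>I. T (g i) x)"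
  using assms(2,3)
proof (induction I rule: finite_induct)
  case empty
  then show ?case
    using bounded_op_L2_zero[OF T] by simp
next
  case (insert j I)
  have "AE x in M. T (\<lambda>y. 1 * g j y + (\<Sum>i\<in>I. g i y)) x = 1 * T (g j) x + T (\<lambda>y. \<Sum>i\<in>I. g i y) x"
    using insert by (intro bounded_op_L2_lincomb[OF T] L2_sum) auto
  moreover have "AE x in M. T (\<lambda>y. \<Sum>i\<in>I. g i y) x = (\<Sum>i\<in>I. T (g i) x)"
    using insert by auto
  ultimately show ?case
    by eventually_elim (simp add: insert.hyps)
qed

lemma bounded_op_L2_l2_inner_sum:
  assumes T: "bounded_op_L2 M T" and I: "finite I" and g: "\<And>i. i \<in> I \<Longrightarrow> g i \<in> L2 M"
  shows "l2_inner M (T (\<lambda>x. \<Sum>i\<in>I. g i x)) (\<lambda>x. \<Sum>i\<in>I. g i x)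
    = (\<Sum>i\<in>I. \<Sum>j\<in>I. l2_inner M (T (g i)) (g j))"
proof -
  have Tg: "T (g i) \<in> L2 M" if "i \<in> I" for i
    using T g[OF that] by (rule bounded_op_L2_closed)
  have sum: "(\<lambda>x. \<Sum>i\<in>I. g i x) \<in> L2 M"
    using I g by (rule L2_sum)
  have "l2_inner M (T (\<lambda>x. \<Sum>i\<in>I. g i x)) (\<lambda>x. \<Sum>i\<in>I. g i x)
    = l2_inner M (\<lambda>x. \<Sum>i\<in>I. T (g i) x) (\<lambda>x. \<Sum>i\<in>I. g i x)"
    using bounded_op_L2_sum[OF T I g] bounded_op_L2_closed[OF T sum] L2_sum[OF I Tg] sum
    by (intro l2_inner_cong_AE) auto
  also have "\<dots> = (\<Sum>i\<in>I. \<Sum>j\<in>I. l2_inner M (T (g i)) (g j))"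
    using I I Tg g by (rule l2_inner_sum_sum)
  finally show ?thesis .
qed

lemma bounded_op_L2_numerical_range_bound:
  assumes T: "bounded_op_L2 M T"
  obtains K where "\<And>f. f \<in> L2 M \<Longrightarrow> \<bar>Re (l2_inner M (T f) f)\<bar> \<le> K * Re (l2_inner M f f)"
proof -
  obtain C where C: "\<And>f. f \<in> L2 M \<Longrightarrow> Re (l2_inner M (T f) (T f)) \<le> C * Re (l2_inner M f f)"
    using T unfolding bounded_op_L2_def by blast
  have "\<bar>Re (l2_inner M (T f) f)\<bar> \<le> (C + 1) / 2 * Re (l2_inner M f f)" if f: "f \<in> L2 M" for f
  proof -
    have Tf: "T f \<in> L2 M"
      using T f by (rule bounded_op_L2_closed)
    have "\<bar>Re (l2_inner M (T f) f)\<bar> \<le> cmod (l2_inner M (T f) f)"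
      by (rule abs_Re_le_cmod)
    also have "\<dots> \<le> (\<integral>x. cmod (T f x * cnj (f x)) \<partial>M)"
      unfolding l2_inner_def by (rule integral_norm_bound)
    also have "\<dots> \<le> (\<integral>x. ((cmod (T f x))\<^sup>2 + (cmod (f x))\<^sup>2) / 2 \<partial>M)"
    proof (rule integral_mono)
      show "integrable M (\<lambda>x. cmod (T f x * cnj (f x)))"
        using L2_integrable_mult_cnj[OF Tf f] by simp
      show "integrable M (\<lambda>x. ((cmod (T f x))\<^sup>2 + (cmod (f x))\<^sup>2) / 2)"
        using Tf f by (simp add: L2_integrable_norm_square)
      show "cmod (T f x * cnj (f x)) \<le> ((cmod (T f x))\<^sup>2 + (cmod (f x))\<^sup>2) / 2" for x
        using sum_squares_bound[of "cmod (T f x)" "cmod (f x)"] by (simp add: norm_mult field_simps)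
    qed
    also have "\<dots> = (Re (l2_inner M (T f) (T f)) + Re (l2_inner M f f)) / 2"
      using Tf f by (simp add: l2_inner_self L2_integrable_norm_square)
    also have "\<dots> \<le> (C + 1) / 2 * Re (l2_inner M f f)"
      using C[OF f] by (simp add: field_simps)
    finally show ?thesis .
  qed
  then show ?thesis
    by (rule that)
qed

lemma selfadjoint_op_L2_bounded: "selfadjoint_op_L2 M T \<Longrightarrow> bounded_op_L2 M T"
  by (simp add: selfadjoint_op_L2_def)

lemma selfadjoint_op_L2_symmetric:
  "selfadjoint_op_L2 M T \<Longrightarrow> f \<in> L2 M \<Longrightarrow> g \<in> L2 M \<Longrightarrow> l2_inner M (T f) g = l2_inner M f (T g)"
  by (simp add: selfadjoint_op_L2_def)

lemma selfadjoint_op_L2_shifted_Cauchy_Schwarz: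
  assumes T: "selfadjoint_op_L2 M T"
    and pos: "\<And>g. g \<in> L2 M \<Longrightarrow> m * Re (l2_inner M g g) \<le> Re (l2_inner M (T g) g)"
    and x: "x \<in> L2 M" and y: "y \<in> L2 M"
  defines "B u v \<equiv> Re (l2_inner M (T u) v) - m * Re (l2_inner M u v)"
  shows "B x y \<le> sqrt (B x x * B y y)"
proof (rule quadratic_nonneg_imp_le_sqrt)
  show "0 \<le> B x x" "0 \<le> B y y"
    using pos x y by (simp_all add: B_def)
next
  fix t :: real
  define z where "z = (\<lambda>a. of_real t * y a + x a)"
  have Tb: "bounded_op_L2 M T"
    using T by (rule selfadjoint_op_L2_bounded)
  have Tx: "T x \<in> L2 M" and Ty: "T y \<in> L2 M" and z: "z \<in> L2 M"
    using Tb x y by (simp_all add: bounded_op_L2_closed L2_lincomb z_def)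
  have "l2_inner M (T z) z = l2_inner M (\<lambda>a. of_real t * T y a + T x a) z"
    using bounded_op_L2_lincomb[OF Tb y x] bounded_op_L2_closed[OF Tb z] Tx Ty z
    by (intro l2_inner_cong_AE) (auto simp: z_def L2_lincomb)
  moreover have "Re (l2_inner M (T y) x) = Re (l2_inner M (T x) y)"
    using selfadjoint_op_L2_symmetric[OF T y x] l2_inner_commute[of M y "T x"] by simp
  moreover have "Re (l2_inner M y x) = Re (l2_inner M x y)"
    using l2_inner_commute[of M y x] by simp
  ultimately have "B z z = B x x + 2 * t * B x y + t\<^sup>2 * B y y"
    using Re_l2_inner_real_lincomb[OF Ty Tx x y, of t] Re_l2_inner_real_lincomb[OF y x x y, of t]
    by (simp add: B_def z_def algebra_simps)
  then show "0 \<le> B x x + 2 * t * B x y + t\<^sup>2 * B y y"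
    using pos[OF z] by (simp add: B_def)
qed

definition rayleigh_quotients ::
    "'a measure \<Rightarrow> ('a \<Rightarrow> complex) set \<Rightarrow> (('a \<Rightarrow> complex) \<Rightarrow> 'a \<Rightarrow> complex) \<Rightarrow> real set" where
  "rayleigh_quotients M H S = {Re (l2_inner M (S f) f / l2_inner M f f) | f. f \<in> H \<and> l2_inner M f f \<noteq> 0}"

lemma Mop_eq_Sup_rayleigh_quotients: "Mop M H S = Sup (rayleigh_quotients M H S)"
  by (simp add: Mop_def rayleigh_quotients_def)

lemma mop_eq_Inf_rayleigh_quotients: "mop M H S = Inf (rayleigh_quotients M H S)"
  by (simp add: mop_def rayleigh_quotients_def)

lemma rayleigh_quotientsI:
  "f \<in> H \<Longrightarrow> l2_inner M f f \<noteq> 0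
    \<Longrightarrow> Re (l2_inner M (S f) f) / Re (l2_inner M f f) \<in> rayleigh_quotients M H S"
  by (auto simp: rayleigh_quotients_def Re_divide_l2_inner_self)

lemma rayleigh_quotientsE:
  assumes "q \<in> rayleigh_quotients M H S"
  obtains f where "f \<in> H" "0 < Re (l2_inner M f f)"
    and "q = Re (l2_inner M (S f) f) / Re (l2_inner M f f)"
  using assms by (auto simp: rayleigh_quotients_def Re_divide_l2_inner_self l2_inner_self_neq_0_iff)

lemma rayleigh_quotients_subset:
  assumes "\<And>f. f \<in> H \<Longrightarrow> \<bar>Re (l2_inner M (S f) f)\<bar> \<le> K * Re (l2_inner M f f)"
  shows "rayleigh_quotients M H S \<subseteq> {-K..K}"
proof
  fix q
  assume "q \<in> rayleigh_quotients M H S"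
  then obtain f where f: "f \<in> H" "0 < Re (l2_inner M f f)"
    and q: "q = Re (l2_inner M (S f) f) / Re (l2_inner M f f)"
    by (rule rayleigh_quotientsE)
  have "\<bar>q\<bar> \<le> K"
    using assms[OF f(1)] f(2) by (simp add: q abs_divide pos_divide_le_eq)
  then show "q \<in> {-K..K}"
    by auto
qed

lemma Re_l2_inner_le_Mop:
  assumes "bdd_above (rayleigh_quotients M H S)" "H \<subseteq> L2 M" "f \<in> H" "S f \<in> borel_measurable M"
  shows "Re (l2_inner M (S f) f) \<le> Mop M H S * Re (l2_inner M f f)"
proof (cases "l2_inner M f f = 0")
  case True
  then show ?thesis
    using assms l2_inner_eq_0_if_self_eq_0[of f M "S f"] by auto
next
  case False
  then have "Re (l2_inner M (S f) f) / Re (l2_inner M f f) \<le> Mop M H S"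
    unfolding Mop_eq_Sup_rayleigh_quotients using assms by (intro cSup_upper rayleigh_quotientsI)
  then show ?thesis
    using False by (simp add: l2_inner_self_neq_0_iff pos_divide_le_eq)
qed

lemma mop_le_Re_l2_inner:
  assumes "bdd_below (rayleigh_quotients M H S)" "H \<subseteq> L2 M" "f \<in> H" "S f \<in> borel_measurable M"
  shows "mop M H S * Re (l2_inner M f f) \<le> Re (l2_inner M (S f) f)"
proof (cases "l2_inner M f f = 0")
  case True
  then show ?thesis
    using assms l2_inner_eq_0_if_self_eq_0[of f M "S f"] by auto
next
  case False
  then have "mop M H S \<le> Re (l2_inner M (S f) f) / Re (l2_inner M f f)"
    unfolding mop_eq_Inf_rayleigh_quotients using assms by (intro cInf_lower rayleigh_quotientsI)
  then show ?thesis
    using False by (simp add: l2_inner_self_neq_0_iff pos_le_divide_eq)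
qed

lemma Mop_le:
  assumes "g \<in> H" "l2_inner M g g \<noteq> 0"
    and "\<And>f. f \<in> H \<Longrightarrow> Re (l2_inner M (S f) f) \<le> B * Re (l2_inner M f f)"
  shows "Mop M H S \<le> B"
  unfolding Mop_eq_Sup_rayleigh_quotients
proof (rule cSup_least)
  show "rayleigh_quotients M H S \<noteq> {}"
    using assms(1,2) rayleigh_quotientsI by blast
next
  fix q
  assume "q \<in> rayleigh_quotients M H S"
  then show "q \<le> B"
    by (elim rayleigh_quotientsE) (use assms(3) in \<open>simp add: pos_divide_le_eq\<close>)
qed

lemma mop_L2_le_Re_l2_inner:
  assumes T: "bounded_op_L2 M T" and f: "f \<in> L2 M"
  shows "mop M (L2 M) T * Re (l2_inner M f f) \<le> Re (l2_inner M (T f) f)"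
proof -
  obtain K where "\<And>f. f \<in> L2 M \<Longrightarrow> \<bar>Re (l2_inner M (T f) f)\<bar> \<le> K * Re (l2_inner M f f)"
    using bounded_op_L2_numerical_range_bound[OF T] by blast
  then have "rayleigh_quotients M (L2 M) T \<subseteq> {-K..K}"
    by (rule rayleigh_quotients_subset)
  then have "bdd_below (rayleigh_quotients M (L2 M) T)"
    by (rule bdd_below_mono[OF bdd_below_Icc])
  then show ?thesis
    using T f by (intro mop_le_Re_l2_inner) (auto intro: L2_borel_measurable bounded_op_L2_closed)
qed

lemma L2_on_subset_L2: "L2_on M A \<subseteq> L2 M"
  by (auto simp: L2_on_def)

lemma indicator_mult_in_L2_on:
  assumes [measurable]: "A \<in> sets M" and f: "f \<in> L2 M"
  shows "(\<lambda>x. indicator A x * f x) \<in> L2_on M A"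
proof -
  note [measurable] = L2_borel_measurable[OF f]
  have "integrable M (\<lambda>x. (cmod (indicator A x * f x))\<^sup>2)"
    using f by (intro Bochner_Integration.integrable_bound[OF L2_integrable_norm_square[OF f]])
      (auto simp: indicator_def)
  then show ?thesis
    using f by (simp add: L2_on_def L2_def)
qed

lemma indicator_in_L2_on:
  assumes [measurable]: "A \<in> sets M" and "emeasure M A \<noteq> \<infinity>"
  shows "(indicator A :: 'a \<Rightarrow> complex) \<in> L2_on M A"
    and "l2_inner M (indicator A) (indicator A :: 'a \<Rightarrow> complex) = measure M A"
proof -
  have norm_square: "(\<lambda>x. (cmod (indicator A x :: complex))\<^sup>2) = indicator A"
    by (auto simp: indicator_def)
  have "integrable M (\<lambda>x. (cmod (indicator A x :: complex))\<^sup>2)"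
    unfolding norm_square using assms
    by (simp add: integrable_indicator_iff Int_absorb2 sets.sets_into_space top.not_eq_extremum)
  then show "(indicator A :: 'a \<Rightarrow> complex) \<in> L2_on M A"
    by (simp add: L2_on_def L2_def)
  show "l2_inner M (indicator A) (indicator A :: 'a \<Rightarrow> complex) = measure M A"
    unfolding l2_inner_self norm_square by (simp add: Int_absorb2 sets.sets_into_space)
qed

lemma l2_inner_L2_on_disjoint:
  assumes "f \<in> L2_on M A" "g \<in> L2_on M B" "A \<inter> B = {}"
  shows "l2_inner M f g = 0"
proof -
  have "AE x in M. f x * cnj (g x) = 0"
    using assms unfolding L2_on_def by (auto elim!: AE_mp)
  then show ?thesis
    unfolding l2_inner_def by (rule integral_eq_zero_AE)
qed

lemma l2_inner_self_sum_L2_on_disjoint: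
  assumes I: "finite I" and disj: "disjoint_family_on A I" and g: "\<And>i. i \<in> I \<Longrightarrow> g i \<in> L2_on M (A i)"
  shows "l2_inner M (\<lambda>x. \<Sum>i\<in>I. g i x) (\<lambda>x. \<Sum>i\<in>I. g i x) = (\<Sum>i\<in>I. l2_inner M (g i) (g i))"
proof -
  have gL2: "g i \<in> L2 M" if "i \<in> I" for i
    using g[OF that] L2_on_subset_L2 by blast
  have orth: "l2_inner M (g i) (g j) = 0" if "i \<in> I" "j \<in> I" "i \<noteq> j" for i j
    by (rule l2_inner_L2_on_disjoint[OF g[OF that(1)] g[OF that(2)]])
      (use disj that in \<open>auto simp: disjoint_family_on_def\<close>)
  have "l2_inner M (\<lambda>x. \<Sum>i\<in>I. g i x) (\<lambda>x. \<Sum>i\<in>I. g i x) = (\<Sum>i\<in>I. \<Sum>j\<in>I. l2_inner M (g i) (g j))"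
    using I I gL2 gL2 by (rule l2_inner_sum_sum)
  also have "\<dots> = (\<Sum>i\<in>I. \<Sum>j\<in>I. if i = j then l2_inner M (g i) (g i) else 0)"
    using orth by (intro sum.cong refl) auto
  also have "\<dots> = (\<Sum>i\<in>I. l2_inner M (g i) (g i))"
    using I by simp
  finally show ?thesis .
qed

lemma l2_inner_block_op:
  assumes [measurable]: "A \<in> sets M" "T f \<in> borel_measurable M" and f: "f \<in> L2_on M A"
  shows "l2_inner M (block_op A T f) f = l2_inner M (T f) f"
proof -
  have [measurable]: "f \<in> borel_measurable M"
    using f by (simp add: L2_on_def L2_def)
  have "AE x in M. x \<notin> A \<longrightarrow> f x = 0"
    using f by (simp add: L2_on_def)
  then show ?thesis
    unfolding l2_inner_def block_op_def
    by (intro integral_cong_AE) (auto elim!: AE_mp simp: indicator_def)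
qed

lemma Re_l2_inner_le_Mop_block:
  assumes T: "bounded_op_L2 M T" and A: "A \<in> sets M" and f: "f \<in> L2_on M A"
  shows "Re (l2_inner M (T f) f) \<le> Mop M (L2_on M A) (block_op A T) * Re (l2_inner M f f)"
proof -
  obtain K where K: "\<And>f. f \<in> L2 M \<Longrightarrow> \<bar>Re (l2_inner M (T f) f)\<bar> \<le> K * Re (l2_inner M f f)"
    using bounded_op_L2_numerical_range_bound[OF T] by blast
  have Tg: "T g \<in> borel_measurable M" if "g \<in> L2_on M A" for g
    using that T L2_on_subset_L2 by (meson L2_borel_measurable bounded_op_L2_closed subsetD)
  have block: "l2_inner M (block_op A T g) g = l2_inner M (T g) g" if "g \<in> L2_on M A" for g
    using A Tg[OF that] that by (rule l2_inner_block_op)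
  have "rayleigh_quotients M (L2_on M A) (block_op A T) \<subseteq> {-K..K}"
    by (rule rayleigh_quotients_subset) (simp add: block K subsetD[OF L2_on_subset_L2])
  then have "bdd_above (rayleigh_quotients M (L2_on M A) (block_op A T))"
    by (rule bdd_above_mono[OF bdd_above_Icc])
  moreover have "block_op A T f \<in> borel_measurable M"
    using A Tg[OF f] unfolding block_op_def by measurable
  ultimately have "Re (l2_inner M (block_op A T f) f) \<le> Mop M (L2_on M A) (block_op A T) * Re (l2_inner M f f)"
    using f L2_on_subset_L2 by (intro Re_l2_inner_le_Mop) auto
  then show ?thesis
    using block[OF f] by simp
qed

lemma mop_le_Mop_block:
  assumes T: "bounded_op_L2 M T" and A: "A \<in> sets M" and "0 < measure M A"
  shows "mop M (L2 M) T \<le> Mop M (L2_on M A) (block_op A T)"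
proof -
  have "emeasure M A \<noteq> \<infinity>"
    using assms(3) measure_zero_top by fastforce
  note ind = indicator_in_L2_on[OF A this]
  have "mop M (L2 M) T * measure M A \<le> Mop M (L2_on M A) (block_op A T) * measure M A"
    using mop_L2_le_Re_l2_inner[OF T] Re_l2_inner_le_Mop_block[OF T A] ind L2_on_subset_L2
    by (metis Re_complex_of_real order_trans subsetD)
  then show ?thesis
    using assms(3) by simp
qed

lemma Re_l2_inner_sum_le_blocks:
  assumes T: "selfadjoint_op_L2 M T" and I: "finite I" and disj: "disjoint_family_on A I"
    and g: "\<And>i. i \<in> I \<Longrightarrow> g i \<in> L2_on M (A i)"
    and pos: "\<And>h. h \<in> L2 M \<Longrightarrow> m * Re (l2_inner M h h) \<le> Re (l2_inner M (T h) h)"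
    and block: "\<And>i h. i \<in> I \<Longrightarrow> h \<in> L2_on M (A i) \<Longrightarrow> Re (l2_inner M (T h) h) \<le> c i * Re (l2_inner M h h)"
    and c: "\<And>i. i \<in> I \<Longrightarrow> m \<le> c i"
  defines "f \<equiv> \<lambda>x. \<Sum>i\<in>I. g i x"
  shows "Re (l2_inner M (T f) f) \<le> (m + (\<Sum>i\<in>I. c i - m)) * Re (l2_inner M f f)"
proof -
  define B where "B u v = Re (l2_inner M (T u) v) - m * Re (l2_inner M u v)" for u v
  define n where "n i = Re (l2_inner M (g i) (g i))" for i
  have Tb: "bounded_op_L2 M T"
    using T by (rule selfadjoint_op_L2_bounded)
  have gL2: "g i \<in> L2 M" if "i \<in> I" for i
    using g[OF that] L2_on_subset_L2 by blast
  have Tff: "l2_inner M (T f) f = (\<Sum>i\<in>I. \<Sum>j\<in>I. l2_inner M (T (g i)) (g j))"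
    unfolding f_def using Tb I gL2 by (rule bounded_op_L2_l2_inner_sum)
  have ff: "l2_inner M f f = (\<Sum>i\<in>I. \<Sum>j\<in>I. l2_inner M (g i) (g j))"
    unfolding f_def using I I gL2 gL2 by (rule l2_inner_sum_sum)
  have ff_n: "Re (l2_inner M f f) = (\<Sum>i\<in>I. n i)"
    unfolding f_def n_def using I disj g by (simp add: l2_inner_self_sum_L2_on_disjoint)
  have "Re (l2_inner M (T f) f) - m * Re (l2_inner M f f) = (\<Sum>i\<in>I. \<Sum>j\<in>I. B (g i) (g j))"
    by (simp add: Tff ff B_def sum_subtractf sum_distrib_left)
  also have "\<dots> \<le> (\<Sum>i\<in>I. c i - m) * (\<Sum>i\<in>I. n i)"
  proof (rule double_sum_le_sum_mult_sum[OF I])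
    show "B (g i) (g j) \<le> sqrt (B (g i) (g i) * B (g j) (g j))" if "i \<in> I" "j \<in> I" for i j
      unfolding B_def using T pos gL2[OF that(1)] gL2[OF that(2)]
      by (rule selfadjoint_op_L2_shifted_Cauchy_Schwarz)
    show "0 \<le> B (g i) (g i) \<and> B (g i) (g i) \<le> (c i - m) * n i" if "i \<in> I" for i
      using pos[OF gL2[OF that]] block[OF that g[OF that]] by (simp add: B_def n_def algebra_simps)
    show "0 \<le> c i - m \<and> 0 \<le> n i" if "i \<in> I" for i
      using c[OF that] by (simp add: n_def Re_l2_inner_self_nonneg)
  qed
  finally show ?thesis
    unfolding ff_n by (simp add: algebra_simps)
qed

lemma Re_l2_inner_le_block_Mop_sum:
  assumes T: "selfadjoint_op_L2 M T" and I: "finite I"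
    and A: "\<And>i. i \<in> I \<Longrightarrow> A i \<in> sets M" "\<And>i. i \<in> I \<Longrightarrow> 0 < measure M (A i)"
    and disj: "disjoint_family_on A I" and cover: "space M \<subseteq> (\<Union>i\<in>I. A i)"
    and f: "f \<in> L2 M"
  defines "m \<equiv> mop M (L2 M) T"
  shows "Re (l2_inner M (T f) f)
    \<le> (m + (\<Sum>i\<in>I. Mop M (L2_on M (A i)) (block_op (A i) T) - m)) * Re (l2_inner M f f)"
proof -
  define F where "F = (\<lambda>x. \<Sum>i\<in>I. indicator (A i) x * f x)"
  have Tb: "bounded_op_L2 M T"
    using T by (rule selfadjoint_op_L2_bounded)
  have pieces: "(\<lambda>x. indicator (A i) x * f x) \<in> L2_on M (A i)" if "i \<in> I" for i
    using A(1)[OF that] f by (rule indicator_mult_in_L2_on)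
  have FL2: "F \<in> L2 M"
    unfolding F_def using I pieces L2_on_subset_L2 by (intro L2_sum) auto
  have "F x = f x" if x: "x \<in> space M" for x
  proof -
    obtain j where "j \<in> I" "x \<in> A j"
      using cover x by blast
    then show ?thesis
      unfolding F_def using sum_indicator_disjoint_family[OF disj _ I, of x j "\<lambda>_. f x"]
      by (simp add: mult.commute)
  qed
  then have fF: "AE x in M. f x = F x"
    by simp
  have "l2_inner M (T f) f = l2_inner M (T F) F" and "l2_inner M f f = l2_inner M F F"
    using fF bounded_op_L2_cong_AE[OF Tb f FL2 fF] f FL2 bounded_op_L2_closed[OF Tb]
    by (auto intro!: l2_inner_cong_AE)
  moreover have "Re (l2_inner M (T F) F)
    \<le> (m + (\<Sum>i\<in>I. Mop M (L2_on M (A i)) (block_op (A i) T) - m)) * Re (l2_inner M F F)"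
    unfolding F_def using T I disj pieces
  proof (rule Re_l2_inner_sum_le_blocks)
    show "m * Re (l2_inner M h h) \<le> Re (l2_inner M (T h) h)" if "h \<in> L2 M" for h
      unfolding m_def using Tb that by (rule mop_L2_le_Re_l2_inner)
    show "Re (l2_inner M (T h) h) \<le> Mop M (L2_on M (A i)) (block_op (A i) T) * Re (l2_inner M h h)"
      if "i \<in> I" "h \<in> L2_on M (A i)" for i h
      using Tb A(1)[OF that(1)] that(2) by (rule Re_l2_inner_le_Mop_block)
    show "m \<le> Mop M (L2_on M (A i)) (block_op (A i) T)" if "i \<in> I" for i
      unfolding m_def using Tb A(1,2)[OF that] by (rule mop_le_Mop_block)
  qed
  ultimately show ?thesis
    by simp
qed

theorem lemma6p6:
  fixes M :: "'a measure" and T :: "('a \<Rightarrow> complex) \<Rightarrow> ('a \<Rightarrow> complex)"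
    and k :: nat and A :: "nat \<Rightarrow> 'a set"
  assumes "standard_prob_space M"
    and "selfadjoint_op_L2 M T"
    and "\<And>i. i \<in> {1..k} \<Longrightarrow> A i \<in> sets M"
    and "\<And>i. i \<in> {1..k} \<Longrightarrow> measure M (A i) > 0"
    and "\<And>i j. i \<in> {1..k} \<Longrightarrow> j \<in> {1..k} \<Longrightarrow> i \<noteq> j \<Longrightarrow> A i \<inter> A j = {}"
    and "(\<Union>i\<in>{1..k}. A i) = space M"
  shows "real (k - 1) * mop M (L2 M) T + Mop M (L2 M) T
           \<le> (\<Sum>i=1..k. Mop M (L2_on M (A i)) (block_op (A i) T))"
proof -
  have "k \<noteq> 0"
    using assms(1,6) prob_space.not_empty by (force simp: standard_prob_space_def)
  then have one: "1 \<in> {1..k}"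
    by simp
  have "emeasure M (A 1) \<noteq> \<infinity>"
    using assms(4)[OF one] measure_zero_top by fastforce
  note witness = indicator_in_L2_on[OF assms(3)[OF one] this]
  define m where "m = mop M (L2 M) T"
  define bound where "bound = m + (\<Sum>i\<in>{1..k}. Mop M (L2_on M (A i)) (block_op (A i) T) - m)"
  have "Mop M (L2 M) T \<le> bound"
  proof (rule Mop_le)
    show "indicator (A 1) \<in> L2 M" "l2_inner M (indicator (A 1)) (indicator (A 1)) \<noteq> 0"
      using witness assms(4)[OF one] L2_on_subset_L2 by auto
    show "Re (l2_inner M (T f) f) \<le> bound * Re (l2_inner M f f)" if "f \<in> L2 M" for f
      unfolding bound_def m_def
      by (rule Re_l2_inner_le_block_Mop_sum[OF assms(2) finite_atLeastAtMost assms(3,4) _ _ that])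
        (use assms(5,6) in \<open>auto simp: disjoint_family_on_def\<close>)
  qed
  then show ?thesis
    using \<open>k \<noteq> 0\<close> by (simp add: bound_def m_def sum_subtractf of_nat_diff algebra_simps)
qed

end
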